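(* Let $m\ge 1$ and let $f_1,\dots,f_m:[0,\infty)\to[0,\infty)$ be twice differentiable functions such that for every $i$: $f_i(0)=0$; $f_i(x)<x$ for all $x>0$; $f_i'(x)>0$ and $f_i''(x)<0$ for all $x$; and $\lim_{x\to\infty}f_i(x)=K_i<\infty$. Fix $\rho\in[0,1)$. Then there is a unique pair $(\mathbf{u},\mu)$ with $\mathbf{u}=(u_1,\dots,u_m)^{T}$, $u_i\ge 0$, $\sum_i u_i=1$, and $0<\mu<1$, satisfying $$u_i=\Big((1-\rho)+\frac{\rho}{\mu}\Big)f_i(u_i)+\frac{1-\rho}{m}(1-\mu)\quad (i=1,\dots,m),\qquad \mu=\sum_{i=1}^m f_i(u_i),$$ i.e. the map $F$ below has a unique fixed point on the simplex. Moreover this fixed point is linearly stable: every eigenvalue of the Jacobian of $F$ at the fixed point is real and lies in $[0,1)$.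
   Context: The infinite-population foraging model is the map $F$ on the simplex $\{\mathbf{u}\in\mathbb{R}^m: u_i\ge0,\ \sum_i u_i=1\}$ given by $\mathbf{u}_{n+1}=F(\mathbf{u}_n)$ with $$F(\mathbf{u})=\mathbf{f}(\mathbf{u})+\big(1-\langle\mathbf{1},\mathbf{f}(\mathbf{u})\rangle\big)\Big(\frac{\rho}{\langle\mathbf{1},\mathbf{f}(\mathbf{u})\rangle}\mathbf{f}(\mathbf{u})+\frac{1-\rho}{m}\mathbf{1}\Big),$$ where $\mathbf{f}(\mathbf{u})=(f_1(u_1),\dots,f_m(u_m))^T$, $\mathbf{1}=(1,\dots,1)^T$, and $\rho\in[0,1]$ is the recruitment probability. Here $u_{i,n}$ is the fraction of foragers flying to site $i$ at time $n$ and $f_i(u)$ the fraction that forage successfully there. Steady states are fixed points of $F$. *)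

theory Defs
  imports "HOL-Analysis.Analysis"
begin

text \<open>The probability prob_simplex in R^m, sites indexed by a finite type 'n with m = CARD('n).\<close>
definition prob_simplex :: "(real^'n::finite) set" where
  "prob_simplex = {u. (\<forall>i. 0 \<le> u$i) \<and> (\<Sum>i\<in>UNIV. u$i) = 1}"

definition forage_map :: "('n::finite \<Rightarrow> real \<Rightarrow> real) \<Rightarrow> real \<Rightarrow> real^'n \<Rightarrow> real^'n" where
  "forage_map f \<rho> u =
     (let S = (\<Sum>j\<in>UNIV. f j (u$j)) in
      (\<chi> i. f i (u$i) + (1 - S) * (\<rho> / S * f i (u$i) + (1 - \<rho>) / real CARD('n))))"

definition cmat :: "real^'n^'m \<Rightarrow> complex^'n^'m" where
  "cmat A = (\<chi> i j. complex_of_real (A$i$j))"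

definition is_eigenvalue :: "real^'n^'n \<Rightarrow> complex \<Rightarrow> bool" where
  "is_eigenvalue A lam \<longleftrightarrow> (\<exists>v. v \<noteq> 0 \<and> cmat A *v v = lam *s v)"

end

(* Write S(u) = sum_j f_j(u_j) and a(S) = 1 - rho + rho/S, t(S) = (1 - rho)(1 - S)/m.  Since f_i is concave
   with f_i(0) = 0 and t > 0, the affine map x |-> a f_i(x) + t crosses the diagonal only once, from
   above, with slope a f_i'(u_i) < 1 there; as a and t decrease in S, so does that crossing.  Brouwer's
   theorem gives a fixed point, and two steady states with S <= S' satisfy u' <= u componentwise,
   hence u' = u because both sum to 1.

   The Jacobian of F at the fixed point is diag(x) - b d^T with x_i = a f_i'(u_i) in (0,1) and b, d > 0.
   An eigenvalue lam that is not a diagonal entry solves the secular equation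
   sum_k d_k b_k / (x_k - lam) = 1; its imaginary part forces lam to be real, and since the left-hand
   side equals 1 at lam = 0 and increases in lam, lam lies in [0,1). *)

theory Submission
  imports Defs
begin

lemma has_real_derivative_at_if_within_atLeast:
  fixes F :: "real \<Rightarrow> real"
  assumes "a < x" and "(F has_real_derivative D) (at x within {a..})"
  shows "(F has_real_derivative D) (at x)"
  using assms at_within_interior[of x "{a..}"] by simp

locale concave_C2 =
  fixes g g' g'' :: "real \<Rightarrow> real"
  assumes g_deriv: "\<And>x. x \<ge> 0 \<Longrightarrow> (g has_real_derivative g' x) (at x within {0..})"
      and g'_deriv: "\<And>x. x \<ge> 0 \<Longrightarrow> (g' has_real_derivative g'' x) (at x within {0..})"
      and g''_nonpos: "\<And>x. x \<ge> 0 \<Longrightarrow> g'' x \<le> 0"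
begin

lemma continuous_on_g: "continuous_on {0..} g"
  by (rule DERIV_continuous_on) (use g_deriv in auto)

lemma continuous_on_g': "continuous_on {0..} g'"
  by (rule DERIV_continuous_on) (use g'_deriv in auto)

lemma g'_antimono:
  assumes "0 \<le> a" "a \<le> b"
  shows "g' b \<le> g' a"
proof (rule DERIV_nonpos_imp_decreasing_open[OF \<open>a \<le> b\<close>])
  fix x assume "a < x" "x < b"
  then show "\<exists>y. (g' has_real_derivative y) (at x) \<and> y \<le> 0"
    using has_real_derivative_at_if_within_atLeast[OF _ g'_deriv] g''_nonpos assms
    by (metis less_eq_real_def order_le_less_trans)
qed (use assms in \<open>auto intro: continuous_on_subset[OF continuous_on_g']\<close>)

lemma below_tangent:
  assumes "0 \<le> y" "0 \<le> z"
  shows "g z \<le> g y + g' y * (z - y)"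
proof -
  define h where "h x = g x - g' y * x" for x
  have h_deriv: "(h has_real_derivative g' x - g' y) (at x)" if "0 < x" for x
    unfolding h_def using has_real_derivative_at_if_within_atLeast[OF that g_deriv] that
    by (auto intro!: derivative_eq_intros)
  have h_cont: "continuous_on {a..b} h" if "0 \<le> a" for a b
    unfolding h_def using that
    by (intro continuous_intros continuous_on_subset[OF continuous_on_g]) auto
  have "h z \<le> h y"
  proof (cases "y \<le> z")
    case True
    show ?thesis
    proof (rule DERIV_nonpos_imp_decreasing_open[OF True])
      fix x assume "y < x" "x < z"
      then show "\<exists>D. (h has_real_derivative D) (at x) \<and> D \<le> 0"
        using h_deriv[of x] g'_antimono[of y x] assms by (intro exI[of _ "g' x - g' y"]) auto
    qed (use h_cont assms in auto)
  next
    case False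
    then have "z \<le> y" by simp
    then show ?thesis
    proof (rule DERIV_nonneg_imp_increasing_open)
      fix x assume "z < x" "x < y"
      then show "\<exists>D. (h has_real_derivative D) (at x) \<and> D \<ge> 0"
        using h_deriv[of x] g'_antimono[of x y] assms by (intro exI[of _ "g' x - g' y"]) auto
    qed (use h_cont assms in auto)
  qed
  then show ?thesis unfolding h_def by (simp add: algebra_simps)
qed

end

locale concave_C2_zero = concave_C2 +
  assumes g_zero: "g 0 = 0"
begin

lemma deriv_mult_le: "0 \<le> x \<Longrightarrow> x * g' x \<le> g x"
  using below_tangent[of x 0] g_zero by (simp add: algebra_simps)

context
  fixes a t r :: real
  assumes a_pos: "0 < a" and t_pos: "0 < t"
      and r_nonneg: "0 \<le> r" and r_fixed: "r = a * g r + t"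
begin

lemma affine_fixed_point_pos: "0 < r"
  using r_nonneg r_fixed g_zero t_pos by (cases "r = 0") auto

lemma affine_fixed_point_slope_lt_1: "a * g' r < 1"
proof -
  have "r * (a * g' r) \<le> a * g r"
    using deriv_mult_le[OF r_nonneg] a_pos by (metis mult.left_commute mult_le_cancel_left_pos)
  also have "\<dots> < r" using r_fixed t_pos by linarith
  finally show ?thesis using affine_fixed_point_pos by simp
qed

lemma affine_below_diagonal:
  assumes "r < x"
  shows "a * g x + t < x"
proof -
  have "a * g x \<le> a * (g r + g' r * (x - r))"
    using below_tangent[of r x] r_nonneg assms a_pos by (intro mult_left_mono) auto
  also have "\<dots> = a * g r + (a * g' r) * (x - r)" by (simp add: algebra_simps)
  also have "(a * g' r) * (x - r) < x - r"
    using affine_fixed_point_slope_lt_1 assms by simp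
  finally show ?thesis using r_fixed by linarith
qed

lemma affine_fixed_point_mono:
  assumes "0 \<le> a'" "a' \<le> a" "t' \<le> t" "0 \<le> g s" "s = a' * g s + t'"
  shows "s \<le> r"
proof (rule ccontr)
  assume "\<not> s \<le> r"
  then have "a * g s + t < s" by (intro affine_below_diagonal) simp
  moreover have "a' * g s \<le> a * g s" using assms by (intro mult_right_mono)
  ultimately show False using assms by linarith
qed

end

end

lemma eigenvector_diag_minus_rank_one:
  fixes x b d :: "'n::finite \<Rightarrow> real"
  assumes "is_eigenvalue (\<chi> i j. (if i = j then x i else 0) - b i * d j) lam"
  obtains v :: "'n \<Rightarrow> complex" and i0 where "v i0 \<noteq> 0"
    and "\<And>i. of_real (x i) * v i - of_real (b i) * (\<Sum>k\<in>UNIV. of_real (d k) * v k) = lam * v i"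
proof -
  obtain v where v: "v \<noteq> 0" "cmat (\<chi> i j. (if i = j then x i else 0) - b i * d j) *v v = lam *s v"
    using assms unfolding is_eigenvalue_def by auto
  obtain i0 where "v $ i0 \<noteq> 0" using v(1) by (auto simp: vec_eq_iff)
  moreover have "of_real (x i) * v$i - of_real (b i) * (\<Sum>k\<in>UNIV. of_real (d k) * v$k) = lam * v$i" for i
  proof -
    have entry: "of_real ((if i = k then x i else 0) - b i * d k) * v$k
        = (if k = i then of_real (x i) * v$k else 0) - of_real (b i) * (of_real (d k) * v$k)" for k
      by (cases "k = i") (simp_all add: algebra_simps)
    have "lam * v$i = (\<Sum>k\<in>UNIV. of_real ((if i = k then x i else 0) - b i * d k) * v$k)"
      using v(2) by (simp add: vec_eq_iff matrix_vector_mult_def cmat_def)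
    also have "\<dots> = of_real (x i) * v$i - of_real (b i) * (\<Sum>k\<in>UNIV. of_real (d k) * v$k)"
      by (simp only: entry sum_subtractf sum_distrib_left) simp
    finally show ?thesis by simp
  qed
  ultimately show ?thesis by (intro that[of "\<lambda>i. v$i" i0])
qed

lemma eigenvalue_diag_minus_rank_one_cases:
  fixes x b d :: "'n::finite \<Rightarrow> real"
  assumes b: "\<And>i. b i \<noteq> 0"
    and "is_eigenvalue (\<chi> i j. (if i = j then x i else 0) - b i * d j) lam"
  shows "(\<exists>i. lam = of_real (x i)) \<or>
         (\<Sum>k\<in>UNIV. of_real (d k * b k) / (of_real (x k) - lam)) = 1"
proof -
  obtain v :: "'n \<Rightarrow> complex" and i0 where v0: "v i0 \<noteq> 0"
    and eig: "\<And>i. of_real (x i) * v i - of_real (b i) * (\<Sum>k\<in>UNIV. of_real (d k) * v k) = lam * v i"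
    using eigenvector_diag_minus_rank_one[OF assms(2)] by blast
  define s where "s = (\<Sum>k\<in>UNIV. of_real (d k) * v k)"
  have eig_s: "of_real (x i) * v i - of_real (b i) * s = lam * v i" for i
    using eig[of i] by (simp add: s_def)
  show ?thesis
  proof (cases "s = 0")
    case True
    then have "lam = of_real (x i0)" using eig_s[of i0] v0 by simp
    then show ?thesis by blast
  next
    case False
    have x_ne: "of_real (x k) - lam \<noteq> 0" for k
      using eig_s[of k] b[of k] False by auto
    have v_eq: "v k = of_real (b k) * s / (of_real (x k) - lam)" for k
      using eig_s[of k] x_ne[of k] by (simp add: field_simps)
    have "s = (\<Sum>k\<in>UNIV. of_real (d k) * v k)" by (simp add: s_def)
    also have "\<dots> = (\<Sum>k\<in>UNIV. of_real (d k) * (of_real (b k) * s / (of_real (x k) - lam)))"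
      by (simp only: v_eq)
    also have "\<dots> = s * (\<Sum>k\<in>UNIV. of_real (d k * b k) / (of_real (x k) - lam))"
      by (simp add: sum_distrib_left mult_ac)
    finally have "s = s * (\<Sum>k\<in>UNIV. of_real (d k * b k) / (of_real (x k) - lam))" .
    then show ?thesis using False by simp
  qed
qed

lemma secular_equation_root_real:
  fixes w x :: "'n::finite \<Rightarrow> real"
  assumes w: "\<And>k. 0 < w k"
    and eq: "(\<Sum>k\<in>UNIV. of_real (w k) / (of_real (x k) - lam)) = 1"
  shows "Im lam = 0"
proof (rule ccontr)
  assume Im_ne: "Im lam \<noteq> 0"
  define n where "n k = (x k - Re lam)\<^sup>2 + (Im lam)\<^sup>2" for k
  have n_pos: "0 < n k" for k using Im_ne by (simp add: n_def sum_power2_gt_zero_iff)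
  have "0 = Im (\<Sum>k\<in>UNIV. of_real (w k) / (of_real (x k) - lam))" using eq by simp
  also have "\<dots> = Im lam * (\<Sum>k\<in>UNIV. w k / n k)"
    by (simp add: Im_sum sum_distrib_left Im_divide n_def power2_eq_square) (simp add: mult.commute)
  finally have "(\<Sum>k\<in>UNIV. w k / n k) = 0" using Im_ne by simp
  moreover have "0 < (\<Sum>k\<in>UNIV. w k / n k)"
    using w n_pos by (intro sum_pos) auto
  ultimately show False by simp
qed

lemma secular_equation_root_bounds:
  fixes w x :: "'n::finite \<Rightarrow> real" and r :: real
  assumes w: "\<And>k. 0 < w k" and x: "\<And>k. 0 < x k" "\<And>k. x k < 1"
    and at0: "(\<Sum>k\<in>UNIV. w k / x k) = 1"
    and at_r: "(\<Sum>k\<in>UNIV. w k / (x k - r)) = 1"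
  shows "0 \<le> r" "r < 1"
proof -
  show "0 \<le> r"
  proof (rule ccontr)
    assume "\<not> 0 \<le> r"
    then have "w k / (x k - r) < w k / x k" for k
      using w[of k] x(1)[of k] by (intro divide_strict_left_mono mult_pos_pos) auto
    then have "(\<Sum>k\<in>UNIV. w k / (x k - r)) < (\<Sum>k\<in>UNIV. w k / x k)"
      by (intro sum_strict_mono) auto
    then show False using at0 at_r by simp
  qed
  show "r < 1"
  proof (rule ccontr)
    assume "\<not> r < 1"
    then have "(\<Sum>k\<in>UNIV. w k / (x k - r)) < (\<Sum>k\<in>(UNIV::'n set). 0)"
      using w x by (intro sum_strict_mono divide_pos_neg) (auto simp: not_less intro: less_le_trans)
    then show False using at_r by simp
  qed
qed

lemma eigenvalue_diag_minus_rank_one: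
  fixes x b d :: "'n::finite \<Rightarrow> real"
  assumes x: "\<And>i. 0 < x i" "\<And>i. x i < 1" and b: "\<And>i. 0 < b i" and d: "\<And>i. 0 < d i"
    and at0: "(\<Sum>i\<in>UNIV. d i * b i / x i) = 1"
    and eig: "is_eigenvalue (\<chi> i j. (if i = j then x i else 0) - b i * d j) lam"
  shows "Im lam = 0 \<and> 0 \<le> Re lam \<and> Re lam < 1"
proof -
  have b_ne: "b i \<noteq> 0" for i using b[of i] by simp
  from eigenvalue_diag_minus_rank_one_cases[OF b_ne eig] show ?thesis
  proof
    assume "\<exists>i. lam = of_real (x i)"
    then show ?thesis using x by (metis Im_complex_of_real Re_complex_of_real less_imp_le)
  next
    assume secular: "(\<Sum>k\<in>UNIV. of_real (d k * b k) / (of_real (x k) - lam)) = 1"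
    have w: "0 < d k * b k" for k using b d by simp
    have "Im lam = 0" by (rule secular_equation_root_real[OF w secular])
    then have "lam = of_real (Re lam)" by (simp add: complex_eq_iff)
    then have "of_real (\<Sum>k\<in>UNIV. d k * b k / (x k - Re lam)) = (1::complex)"
      using secular by (metis (no_types, lifting) of_real_diff of_real_divide of_real_sum sum.cong)
    then have "(\<Sum>k\<in>UNIV. d k * b k / (x k - Re lam)) = 1" using of_real_eq_1_iff by blast
    with secular_equation_root_bounds[OF w x at0] \<open>Im lam = 0\<close> show ?thesis by simp
  qed
qed

lemma compact_prob_simplex: "compact (prob_simplex :: (real^'n::finite) set)"
  unfolding compact_eq_bounded_closed
proof
  show "bounded (prob_simplex :: (real^'n) set)" unfolding bounded_iff
  proof (intro exI ballI)
    fix x :: "real^'n" assume "x \<in> prob_simplex"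
    then have "(\<Sum>i\<in>UNIV. \<bar>x$i\<bar>) = 1" unfolding prob_simplex_def by auto
    then show "norm x \<le> 1" using norm_le_l1_cart[of x] by simp
  qed
  have "prob_simplex = {x::real^'n. \<forall>i. 0 \<le> x$i} \<inter> {x. (\<Sum>i\<in>UNIV. x$i) = 1}"
    unfolding prob_simplex_def by auto
  moreover have "closed {x::real^'n. (\<Sum>i\<in>UNIV. x$i) = 1}"
    by (intro closed_Collect_eq continuous_intros)
  ultimately show "closed (prob_simplex :: (real^'n) set)"
    using closed_positive_orthant closed_Int by metis
qed

lemma convex_prob_simplex: "convex (prob_simplex :: (real^'n::finite) set)"
  unfolding convex_def prob_simplex_def
  by (auto simp: sum.distrib simp flip: sum_distrib_left)

lemma uniform_in_prob_simplex: "(\<chi> i. 1 / real CARD('n)) \<in> (prob_simplex :: (real^'n::finite) set)"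
  unfolding prob_simplex_def by simp

lemma prob_simplex_ex_pos:
  assumes "u \<in> prob_simplex"
  obtains j where "0 < u$j"
proof -
  have "\<not> (\<forall>i. u$i = 0)"
  proof
    assume "\<forall>i. u$i = 0"
    then show False using assms unfolding prob_simplex_def by simp
  qed
  then obtain j where "u$j \<noteq> 0" by blast
  moreover have "0 \<le> u$j" using assms by (simp add: prob_simplex_def)
  ultimately have "0 < u$j" by linarith
  then show ?thesis by (rule that)
qed

lemma has_derivative_vec_nthI:
  fixes F D :: "'a::real_normed_vector \<Rightarrow> real^'n::finite"
  assumes "\<And>j. ((\<lambda>x. F x $ j) has_derivative (\<lambda>h. D h $ j)) (at u)"
  shows "(F has_derivative D) (at u)"
proof (subst has_derivative_componentwise_within, intro ballI)
  fix e :: "real^'n" assume "e \<in> Basis"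
  then obtain j where "e = axis j 1" unfolding Basis_vec_def by auto
  then show "((\<lambda>x. F x \<bullet> e) has_derivative (\<lambda>h. D h \<bullet> e)) (at u)"
    using assms[of j] by (simp add: inner_axis)
qed

locale foraging =
  fixes f f' f'' :: "'n::finite \<Rightarrow> real \<Rightarrow> real" and \<rho> :: real
  assumes f_deriv: "\<And>i x. x \<ge> 0 \<Longrightarrow> (f i has_real_derivative f' i x) (at x within {0..})"
      and f'_deriv: "\<And>i x. x \<ge> 0 \<Longrightarrow> (f' i has_real_derivative f'' i x) (at x within {0..})"
      and f''_nonpos: "\<And>i x. x \<ge> 0 \<Longrightarrow> f'' i x \<le> 0"
      and f_zero: "\<And>i. f i 0 = 0"
      and f_below: "\<And>i x. x > 0 \<Longrightarrow> f i x < x"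
      and f'_pos: "\<And>i x. x \<ge> 0 \<Longrightarrow> f' i x > 0"
      and rho_nonneg: "0 \<le> \<rho>" and rho_lt_1: "\<rho> < 1"
begin

lemma concave_C2_zero_f: "concave_C2_zero (f i) (f' i) (f'' i)"
  by unfold_locales (use f_deriv f'_deriv f''_nonpos f_zero in auto)

lemma f_pos:
  assumes "0 < x"
  shows "0 < f i x"
proof -
  have "x * f' i x \<le> f i x"
    using assms by (intro concave_C2_zero.deriv_mult_le[OF concave_C2_zero_f]) simp
  moreover have "0 < x * f' i x" using assms f'_pos[of x i] by simp
  ultimately show ?thesis by linarith
qed

lemma f_nonneg: "0 \<le> x \<Longrightarrow> 0 \<le> f i x"
  using f_pos f_zero by (cases "x = 0") (auto intro: less_imp_le)

lemma f_le: "0 \<le> x \<Longrightarrow> f i x \<le> x"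
  using f_below f_zero by (cases "x = 0") (auto intro: less_imp_le)

definition success :: "real^'n \<Rightarrow> real" where
  "success u = (\<Sum>i\<in>UNIV. f i (u$i))"

definition steady_state :: "real^'n \<Rightarrow> real \<Rightarrow> bool" where
  "steady_state u \<mu> \<longleftrightarrow> u \<in> prob_simplex \<and> 0 < \<mu> \<and> \<mu> < 1 \<and>
     (\<forall>i. u$i = ((1 - \<rho>) + \<rho> / \<mu>) * f i (u$i) + (1 - \<rho>) / real CARD('n) * (1 - \<mu>)) \<and>
     \<mu> = (\<Sum>i\<in>UNIV. f i (u$i))"

lemma success_pos:
  assumes "u \<in> prob_simplex"
  shows "0 < success u"
proof -
  obtain j where j: "0 < u$j" using prob_simplex_ex_pos[OF assms] .
  have "f j (u$j) \<le> success u" unfolding success_def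
    using assms f_nonneg by (intro member_le_sum) (auto simp: prob_simplex_def)
  then show ?thesis using f_pos[of "u$j" j] j by simp
qed

lemma success_lt_1:
  assumes "u \<in> prob_simplex"
  shows "success u < 1"
proof -
  obtain j where j: "0 < u$j" using prob_simplex_ex_pos[OF assms] .
  have "success u < (\<Sum>i\<in>UNIV. u$i)" unfolding success_def
    using assms f_le f_below[OF j] by (intro sum_strict_mono_ex1) (auto simp: prob_simplex_def)
  then show ?thesis using assms by (simp add: prob_simplex_def)
qed

lemma forage_map_nth:
  assumes "success u \<noteq> 0"
  shows "forage_map f \<rho> u $ i
    = ((1 - \<rho>) + \<rho> / success u) * f i (u$i) + (1 - \<rho>) / real CARD('n) * (1 - success u)"
proof -
  define S where "S = success u"
  have "S \<noteq> 0" using assms by (simp add: S_def)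
  have "forage_map f \<rho> u $ i = f i (u$i) + (1 - S) * (\<rho> / S * f i (u$i) + (1 - \<rho>) / real CARD('n))"
    by (simp add: forage_map_def Let_def S_def success_def)
  also have "\<dots> = ((1 - \<rho>) + \<rho> / S) * f i (u$i) + (1 - \<rho>) / real CARD('n) * (1 - S)"
    using \<open>S \<noteq> 0\<close> by (simp add: field_simps)
  finally show ?thesis by (simp add: S_def)
qed

lemma forage_map_in_prob_simplex:
  assumes u: "u \<in> prob_simplex"
  shows "forage_map f \<rho> u \<in> prob_simplex"
proof -
  define S where "S = success u"
  have S: "0 < S" "S < 1" using success_pos[OF u] success_lt_1[OF u] by (simp_all add: S_def)
  have F_nth: "forage_map f \<rho> u $ i
      = ((1 - \<rho>) + \<rho> / S) * f i (u$i) + (1 - \<rho>) / real CARD('n) * (1 - S)" for i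
    using forage_map_nth[of u i] S(1) by (simp add: S_def)
  have "0 \<le> forage_map f \<rho> u $ i" for i
    unfolding F_nth using S u f_nonneg[of "u$i" i] rho_nonneg rho_lt_1
    by (intro add_nonneg_nonneg mult_nonneg_nonneg) (simp_all add: prob_simplex_def)
  moreover have "(\<Sum>i\<in>UNIV. forage_map f \<rho> u $ i) = 1"
  proof -
    have "(\<Sum>i\<in>UNIV. forage_map f \<rho> u $ i)
        = ((1 - \<rho>) + \<rho> / S) * (\<Sum>i\<in>UNIV. f i (u$i)) + (1 - \<rho>) * (1 - S)"
      by (simp add: F_nth sum.distrib sum_distrib_left)
    also have "\<dots> = ((1 - \<rho>) + \<rho> / S) * S + (1 - \<rho>) * (1 - S)"
      by (simp add: S_def success_def)
    also have "\<dots> = 1" using S by (simp add: field_simps)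
    finally show ?thesis .
  qed
  ultimately show ?thesis by (simp add: prob_simplex_def)
qed

lemma continuous_on_forage_map: "continuous_on prob_simplex (forage_map f \<rho>)"
proof -
  have f_cont: "continuous_on prob_simplex (\<lambda>u::real^'n. f i (u$i))" for i
  proof (rule continuous_on_compose2[OF _ continuous_on_component[OF continuous_on_id]])
    show "continuous_on {0..} (f i)"
      by (rule concave_C2.continuous_on_g[OF concave_C2_zero.axioms(1)[OF concave_C2_zero_f]])
  qed (auto simp: prob_simplex_def)
  have success_ne: "\<forall>u\<in>prob_simplex. (\<Sum>i\<in>UNIV. f i (u$i)) \<noteq> 0"
    using success_pos unfolding success_def by (metis less_irrefl)
  show ?thesis unfolding forage_map_def[abs_def] Let_def
    by (intro continuous_intros f_cont success_ne)
qed

lemma steady_stateD: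
  assumes "steady_state u \<mu>"
  shows "u \<in> prob_simplex" "0 < \<mu>" "\<mu> < 1" "\<mu> = success u"
    and "0 < (1 - \<rho>) + \<rho> / \<mu>" "0 < (1 - \<rho>) / real CARD('n) * (1 - \<mu>)"
    and "u$i = ((1 - \<rho>) + \<rho> / \<mu>) * f i (u$i) + (1 - \<rho>) / real CARD('n) * (1 - \<mu>)"
proof -
  show "u \<in> prob_simplex" "0 < \<mu>" "\<mu> < 1" "\<mu> = success u"
    using assms unfolding steady_state_def success_def by blast+
  show "0 < (1 - \<rho>) + \<rho> / \<mu>"
    using \<open>0 < \<mu>\<close> rho_nonneg rho_lt_1 by (intro add_pos_nonneg) simp_all
  show "0 < (1 - \<rho>) / real CARD('n) * (1 - \<mu>)"
    using \<open>\<mu> < 1\<close> rho_lt_1 by simp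
  show "u$i = ((1 - \<rho>) + \<rho> / \<mu>) * f i (u$i) + (1 - \<rho>) / real CARD('n) * (1 - \<mu>)"
    using assms unfolding steady_state_def by blast
qed

lemma steady_state_pos:
  assumes "steady_state u \<mu>"
  shows "0 < u$i"
proof (rule concave_C2_zero.affine_fixed_point_pos[OF concave_C2_zero_f])
  show "0 \<le> u$i" using steady_stateD(1)[OF assms] by (simp add: prob_simplex_def)
qed (fact steady_stateD[OF assms])+

lemma fixed_point_iff_steady_state:
  "u \<in> prob_simplex \<and> forage_map f \<rho> u = u \<longleftrightarrow> steady_state u (success u)"
proof (cases "u \<in> prob_simplex")
  case True
  then have S: "0 < success u" "success u < 1" by (simp_all add: success_pos success_lt_1)
  have "forage_map f \<rho> u = u \<longleftrightarrow> (\<forall>i. u$i = ((1 - \<rho>) + \<rho> / success u) * f i (u$i)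
          + (1 - \<rho>) / real CARD('n) * (1 - success u))"
    unfolding vec_eq_iff forage_map_nth[OF S(1)[THEN less_imp_neq, symmetric]]
    by (intro iff_allI) (rule eq_commute)
  then show ?thesis using True S by (simp only: steady_state_def success_def[symmetric] simp_thms)
qed (simp add: steady_state_def)

text \<open>A larger success rate \<open>\<mu>\<close> lowers both the slope and the offset of the affine map
  whose fixed point is \<open>u$i\<close>, hence lowers every \<open>u$i\<close>; as both states sum to 1, they coincide.\<close>
lemma steady_state_unique_le:
  assumes u: "steady_state u \<mu>" and v: "steady_state v \<nu>" and "\<mu> \<le> \<nu>"
  shows "u = v"
proof -
  note u_ss = steady_stateD[OF u] and v_ss = steady_stateD[OF v]
  have le: "v$i \<le> u$i" for i
  proof (rule concave_C2_zero.affine_fixed_point_mono[OF concave_C2_zero_f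
        u_ss(5,6) _ u_ss(7) _ _ _ _ v_ss(7)])
    show "0 \<le> (1 - \<rho>) + \<rho> / \<nu>" using v_ss(5) by (rule less_imp_le)
    show "(1 - \<rho>) + \<rho> / \<nu> \<le> (1 - \<rho>) + \<rho> / \<mu>"
      using u_ss(2) \<open>\<mu> \<le> \<nu>\<close> rho_nonneg by (simp add: divide_left_mono)
    show "(1 - \<rho>) / real CARD('n) * (1 - \<nu>) \<le> (1 - \<rho>) / real CARD('n) * (1 - \<mu>)"
      using \<open>\<mu> \<le> \<nu>\<close> rho_lt_1 by (intro mult_left_mono) auto
    show "0 \<le> u$i" "0 \<le> f i (v$i)"
      using u_ss(1) v_ss(1) f_nonneg by (simp_all add: prob_simplex_def)
  qed
  have "(\<Sum>i\<in>UNIV. v$i) = (\<Sum>i\<in>UNIV. u$i)"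
    using u_ss(1) v_ss(1) by (simp add: prob_simplex_def)
  from sum_mono_inv[OF this le] show ?thesis by (simp add: vec_eq_iff)
qed

lemma steady_state_unique:
  assumes "steady_state u \<mu>" and "steady_state v \<nu>"
  shows "u = v \<and> \<mu> = \<nu>"
proof -
  have "u = v"
    using steady_state_unique_le[OF assms] steady_state_unique_le[OF assms(2,1)]
    by (cases "\<mu> \<le> \<nu>") auto
  then show ?thesis using steady_stateD(4)[OF assms(1)] steady_stateD(4)[OF assms(2)] by simp
qed

lemma ex_fixed_point: "\<exists>u. u \<in> prob_simplex \<and> forage_map f \<rho> u = u"
  using brouwer[OF compact_prob_simplex convex_prob_simplex _ continuous_on_forage_map]
    uniform_in_prob_simplex forage_map_in_prob_simplex by blast

lemma ex1_steady_state: "\<exists>!(u, \<mu>). steady_state u \<mu>"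
proof -
  obtain u where u: "steady_state u (success u)"
    using ex_fixed_point fixed_point_iff_steady_state by blast
  show ?thesis
  proof (rule ex1I[of _ "(u, success u)"])
    fix y assume "case y of (v, \<mu>) \<Rightarrow> steady_state v \<mu>"
    then show "y = (u, success u)" using steady_state_unique[OF _ u] by (cases y) auto
  qed (use u in simp)
qed

lemma ex1_fixed_point: "\<exists>!u. u \<in> prob_simplex \<and> forage_map f \<rho> u = u"
proof -
  obtain u where u: "u \<in> prob_simplex \<and> forage_map f \<rho> u = u"
    using ex_fixed_point by blast
  show ?thesis
  proof (rule ex1I[of _ u])
    fix v assume "v \<in> prob_simplex \<and> forage_map f \<rho> v = v"
    then show "v = u" using u by (metis fixed_point_iff_steady_state steady_state_unique)
  qed (rule u)
qed

text \<open>Differentiating \<open>forage_map_nth\<close> in \<open>u\<close>, the dependence through \<open>success u\<close> contributes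
  the rank-one part.\<close>
definition forage_jacobian :: "real^'n \<Rightarrow> real^'n^'n" where
  "forage_jacobian u = (\<chi> i j. (if i = j then ((1 - \<rho>) + \<rho> / success u) * f' i (u$i) else 0)
      - (\<rho> / (success u)\<^sup>2 * f i (u$i) + (1 - \<rho>) / real CARD('n)) * f' j (u$j))"

lemma forage_jacobian_mult_nth:
  "(forage_jacobian u *v h) $ j = ((1 - \<rho>) + \<rho> / success u) * f' j (u$j) * h$j
     - (\<rho> / (success u)\<^sup>2 * f j (u$j) + (1 - \<rho>) / real CARD('n)) * (\<Sum>k\<in>UNIV. f' k (u$k) * h$k)"
proof -
  have entry: "forage_jacobian u $ j $ k * h$k
      = (if k = j then ((1 - \<rho>) + \<rho> / success u) * f' j (u$j) * h$k else 0)
        - (\<rho> / (success u)\<^sup>2 * f j (u$j) + (1 - \<rho>) / real CARD('n)) * (f' k (u$k) * h$k)" for k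
    by (cases "k = j") (simp_all add: forage_jacobian_def algebra_simps)
  show ?thesis
    unfolding matrix_vector_mult_def by (simp only: vec_lambda_beta entry sum_subtractf sum_distrib_left) simp
qed

lemma has_derivative_forage_map:
  assumes u_pos: "\<And>i. 0 < u$i" and S_ne: "success u \<noteq> 0"
  shows "(forage_map f \<rho> has_derivative (\<lambda>h. forage_jacobian u *v h)) (at u)"
proof (rule has_derivative_vec_nthI)
  have f_comp: "((\<lambda>x. f k (x$k)) has_derivative (\<lambda>h. f' k (u$k) * h$k)) (at u)" for k
  proof -
    have "(f k has_real_derivative f' k (u$k)) (at (u$k))"
      using has_real_derivative_at_if_within_atLeast[OF u_pos f_deriv] u_pos[of k] by simp
    then have "(f k has_derivative (\<lambda>h. f' k (u$k) * h)) (at (u$k))"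
      by (simp add: has_field_derivative_def)
    from has_derivative_compose[OF
        bounded_linear.has_derivative[OF bounded_linear_vec_nth has_derivative_ident] this]
    show ?thesis by simp
  qed
  have success_deriv: "(success has_derivative (\<lambda>h. \<Sum>k\<in>UNIV. f' k (u$k) * h$k)) (at u)"
    unfolding success_def[abs_def] by (rule has_derivative_sum) (rule f_comp)
  fix j
  have "(\<lambda>x. forage_map f \<rho> x $ j)
      = (\<lambda>x. f j (x$j) + (1 - success x) * (\<rho> / success x * f j (x$j) + (1 - \<rho>) / real CARD('n)))"
    by (simp add: forage_map_def Let_def success_def)
  moreover have "((\<lambda>x. f j (x$j) + (1 - success x) * (\<rho> / success x * f j (x$j) + (1 - \<rho>) / real CARD('n)))
      has_derivative (\<lambda>h. (forage_jacobian u *v h) $ j)) (at u)"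
    by (rule has_derivative_eq_rhs,
        (rule f_comp success_deriv has_derivative_add has_derivative_mult has_derivative_diff
          has_derivative_divide has_derivative_const S_ne)+)
       (use S_ne in \<open>simp add: forage_jacobian_mult_nth power2_eq_square field_simps\<close>)
  ultimately show "((\<lambda>x. forage_map f \<rho> x $ j) has_derivative (\<lambda>h. (forage_jacobian u *v h) $ j)) (at u)"
    by simp
qed

lemma forage_jacobian_eigenvalue:
  assumes ss: "steady_state u \<mu>" and eig: "is_eigenvalue (forage_jacobian u) lam"
  shows "Im lam = 0 \<and> 0 \<le> Re lam \<and> Re lam < 1"
proof -
  define a where "a = (1 - \<rho>) + \<rho> / \<mu>"
  define b where "b i = \<rho> / \<mu>\<^sup>2 * f i (u$i) + (1 - \<rho>) / real CARD('n)" for i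
  define d where "d i = f' i (u$i)" for i
  have \<mu>: "0 < \<mu>" "\<mu> = success u" using steady_stateD[OF ss] by simp_all
  have a: "0 < a" unfolding a_def by (rule steady_stateD(5)[OF ss])
  have u_nonneg: "0 \<le> u$i" for i using steady_state_pos[OF ss, of i] by simp
  have d: "0 < d i" for i unfolding d_def using f'_pos u_nonneg by simp
  have b: "0 < b i" for i
    unfolding b_def using rho_nonneg rho_lt_1 \<mu> f_nonneg[OF u_nonneg, of i]
    by (intro add_nonneg_pos) simp_all
  have slope: "a * d i < 1" for i
    unfolding a_def d_def
    by (rule concave_C2_zero.affine_fixed_point_slope_lt_1[OF concave_C2_zero_f
          steady_stateD(5,6)[OF ss] u_nonneg steady_stateD(7)[OF ss]])
  have "(\<Sum>i\<in>UNIV. b i) = \<rho> / \<mu>\<^sup>2 * success u + (1 - \<rho>)"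
    by (simp add: b_def success_def sum.distrib sum_distrib_left)
  also have "\<dots> = a" using \<mu> by (simp add: a_def power2_eq_square)
  finally have "(\<Sum>i\<in>UNIV. d i * b i / (a * d i)) = 1"
    using a d by (simp add: less_imp_neq[symmetric] flip: sum_divide_distrib)
  moreover have "forage_jacobian u = (\<chi> i j. (if i = j then a * d i else 0) - b i * d j)"
    unfolding forage_jacobian_def a_def b_def d_def \<mu>(2)[symmetric] by (rule refl)
  ultimately show ?thesis
    using eigenvalue_diag_minus_rank_one[of "\<lambda>i. a * d i" b d] eig a d b slope by simp
qed

end

theorem mainTheorem1:
  fixes f f' f'' :: "'n::finite \<Rightarrow> real \<Rightarrow> real" and \<rho> :: real
  assumes d1: "\<And>i x. x \<ge> 0 \<Longrightarrow> (f i has_real_derivative f' i x) (at x within {0..})"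
      and d2: "\<And>i x. x \<ge> 0 \<Longrightarrow> (f' i has_real_derivative f'' i x) (at x within {0..})"
      and nonneg: "\<And>i x. x \<ge> 0 \<Longrightarrow> f i x \<ge> 0"
      and zero: "\<And>i. f i 0 = 0"
      and below: "\<And>i x. x > 0 \<Longrightarrow> f i x < x"
      and incr: "\<And>i x. x \<ge> 0 \<Longrightarrow> f' i x > 0"
      and conc: "\<And>i x. x \<ge> 0 \<Longrightarrow> f'' i x < 0"
      and lim: "\<And>i. \<exists>K. (f i \<longlongrightarrow> K) at_top"
      and rho: "0 \<le> \<rho>" "\<rho> < 1"
  shows "(\<exists>!(u, \<mu>). u \<in> prob_simplex \<and> 0 < \<mu> \<and> \<mu> < 1 \<and>
            (\<forall>i. u$i = ((1 - \<rho>) + \<rho> / \<mu>) * f i (u$i)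
                        + (1 - \<rho>) / real CARD('n) * (1 - \<mu>)) \<and>
            \<mu> = (\<Sum>i\<in>UNIV. f i (u$i)))
       \<and> (\<exists>!u. u \<in> prob_simplex \<and> forage_map f \<rho> u = u)
       \<and> (\<forall>u. u \<in> prob_simplex \<and> forage_map f \<rho> u = u \<longrightarrow>
            (\<exists>DF. (forage_map f \<rho> has_derivative DF) (at u) \<and>
                  (\<forall>lam. is_eigenvalue (matrix DF) lam \<longrightarrow>
                         Im lam = 0 \<and> 0 \<le> Re lam \<and> Re lam < 1)))"
proof -
  interpret foraging f f' f'' \<rho>
    using d1 d2 conc zero below incr rho by unfold_locales (auto intro: less_imp_le)
  have "\<exists>DF. (forage_map f \<rho> has_derivative DF) (at u) \<and>
            (\<forall>lam. is_eigenvalue (matrix DF) lam \<longrightarrow> Im lam = 0 \<and> 0 \<le> Re lam \<and> Re lam < 1)"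
    if "u \<in> prob_simplex \<and> forage_map f \<rho> u = u" for u
  proof -
    have ss: "steady_state u (success u)" using that fixed_point_iff_steady_state by blast
    have "(forage_map f \<rho> has_derivative (\<lambda>h. forage_jacobian u *v h)) (at u)"
      using has_derivative_forage_map steady_state_pos[OF ss] steady_stateD(2)[OF ss] by simp
    then show ?thesis using forage_jacobian_eigenvalue[OF ss] by auto
  qed
  then show ?thesis using ex1_steady_state ex1_fixed_point unfolding steady_state_def by blast
qed

end
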